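(* Let $h\in(0,2h_c(T))$, $h\neq h_c(T)$, and let $k,N$ be integers with $2^k<N$. There exists a positive constant $C_{17}$ (independent of $k$, $N$, $t$ and of the event) such that for every increasing event $A\in\mathcal F_{S(2^k)}$ and every $t\in[0,1]$, \[ C_{17}\frac{|h-h_c(T)|}{\mathfrak KT}\sum_{v\in\mathrm{Supp}(A)}\mu^N_t\big(A\cap\Delta_vA\big)\le\frac{d}{dt}\mu^N_t(A). \]
   Context: Ising model on $\mathbf{Z}^2$ with spins $\omega\in\{\pm1\}^{\mathbf Z^2}$, nearest-neighbour ferromagnetic interaction, external field $h$, temperature $T$, Boltzmann constant $\mathfrak K$; $T>T_c$ fixed; $h_c(T)$ is the threshold $\inf\{h:\mu_{T,h}(\#\mathbf C_0^+=\infty)>0\}$ for percolation of the $(+)$-cluster (cluster of $+1$ spins under nearest-neighbour adjacency) of the origin under the Gibbs measure $\mu_{T,h}$. $S(n)=[-n,n]^2$; $\mathcal F_V$ is the $\sigma$-algebra generated by the spins in $V$. Periodic measures: $\mu^N_{T,h}$ is the Gibbs measure on the torus obtained from $S(N)$ by identifying opposite sides; $h(t)=h_c(T)+t(h-h_c(T))$ if $h>h_c(T)$, $h(t)=h+t(h_c(T)-h)$ if $h<h_c(T)$; $\mu^N_t=\mu^N_{T,h(t)}$. An event is increasing if it is preserved by changing spins from $-1$ to $+1$. For $v$ and $\omega$, $\omega^v$ is $\omega$ with the spin at $v$ flipped; $\Delta_vA=\{\omega:\mathbf 1_A(\omega)+\mathbf 1_A(\omega^v)=1\}$ (configurations where $v$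 is pivotal for $A$), and $\mathrm{Supp}(A)=\{v\in\mathbf Z^2:\Delta_vA\ne\emptyset\}$. *)

theory Defs
  imports "HOL-Probability.Probability"
begin

type_synonym site = "int \<times> int"
type_synonym config = "site \<Rightarrow> int"

definition Omega :: "config set" where
  "Omega = {\<omega>. \<forall>v. \<omega> v = 1 \<or> \<omega> v = -1}"

definition adj :: "site \<Rightarrow> site \<Rightarrow> bool" where
  "adj u v \<longleftrightarrow> \<bar>fst u - fst v\<bar> + \<bar>snd u - snd v\<bar> = 1"

definition Sbox :: "nat \<Rightarrow> site set" where
  "Sbox n = {-int n..int n} \<times> {-int n..int n}"

definition F_meas :: "site set \<Rightarrow> config set \<Rightarrow> bool" where
  "F_meas V A \<longleftrightarrow> A \<subseteq> Omega \<and>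
     (\<forall>\<omega>\<in>Omega. \<forall>\<omega>'\<in>Omega. (\<forall>v\<in>V. \<omega> v = \<omega>' v) \<longrightarrow> (\<omega> \<in> A \<longleftrightarrow> \<omega>' \<in> A))"

definition increasing :: "config set \<Rightarrow> bool" where
  "increasing A \<longleftrightarrow> (\<forall>\<omega>\<in>A. \<forall>\<omega>'\<in>Omega. (\<forall>v. \<omega> v \<le> \<omega>' v) \<longrightarrow> \<omega>' \<in> A)"

definition flip :: "site \<Rightarrow> config \<Rightarrow> config" where
  "flip v \<omega> = fun_upd \<omega> v (- \<omega> v)"

definition Delta :: "site \<Rightarrow> config set \<Rightarrow> config set" where
  "Delta v A = {\<omega>\<in>Omega. indicator A \<omega> + indicator A (flip v \<omega>) = (1::real)}"

definition Supp :: "config set \<Rightarrow> site set" where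
  "Supp A = {v. Delta v A \<noteq> {}}"

text \<open>Torus obtained from S(N) by identifying opposite sides: vertex set {-N+1..N}^2,
  coordinates taken modulo 2N. Torus configurations are extended by -1 outside the box.\<close>
definition tbox :: "nat \<Rightarrow> site set" where
  "tbox N = {-int N + 1..int N} \<times> {-int N + 1..int N}"

definition wrap :: "nat \<Rightarrow> int \<Rightarrow> int" where
  "wrap N a = (a + int N - 1) mod (2 * int N) - int N + 1"

definition TConf :: "nat \<Rightarrow> config set" where
  "TConf N = {\<omega>. (\<forall>v\<in>tbox N. \<omega> v = 1 \<or> \<omega> v = -1) \<and> (\<forall>v. v \<notin> tbox N \<longrightarrow> \<omega> v = -1)}"

definition torus_energy :: "real \<Rightarrow> nat \<Rightarrow> config \<Rightarrow> real" where
  "torus_energy h N \<omega> =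
     - (\<Sum>(x,y)\<in>tbox N. real_of_int (\<omega> (x,y) * \<omega> (wrap N (x+1), y)
                                     + \<omega> (x,y) * \<omega> (x, wrap N (y+1))))
     - h * (\<Sum>v\<in>tbox N. real_of_int (\<omega> v))"

definition torus_weight :: "real \<Rightarrow> real \<Rightarrow> real \<Rightarrow> nat \<Rightarrow> config \<Rightarrow> real" where
  "torus_weight K T h N \<omega> = exp (- torus_energy h N \<omega> / (K * T))"

definition per_measure :: "real \<Rightarrow> real \<Rightarrow> real \<Rightarrow> nat \<Rightarrow> config set \<Rightarrow> real" where
  "per_measure K T h N B =
     (\<Sum>\<omega>\<in>TConf N. torus_weight K T h N \<omega> * indicator B \<omega>) /
     (\<Sum>\<omega>\<in>TConf N. torus_weight K T h N \<omega>)"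

definition hpath :: "real \<Rightarrow> real \<Rightarrow> real \<Rightarrow> real" where
  "hpath hc h t = (if h > hc then hc + t * (h - hc) else h + t * (hc - h))"

definition config_space :: "config measure" where
  "config_space = PiM UNIV (\<lambda>_. count_space {-1, 1})"

text \<open>Directed adjacent pairs with at least one endpoint in Lambda (each edge counted twice).\<close>
definition edges_touching :: "site set \<Rightarrow> (site \<times> site) set" where
  "edges_touching \<Lambda> = {(u,v). adj u v \<and> (u \<in> \<Lambda> \<or> v \<in> \<Lambda>)}"

definition local_energy :: "real \<Rightarrow> site set \<Rightarrow> config \<Rightarrow> real" where
  "local_energy h \<Lambda> \<eta> =
     - (1/2) * (\<Sum>(u,v)\<in>edges_touching \<Lambda>. real_of_int (\<eta> u * \<eta> v))
     - h * (\<Sum>v\<in>\<Lambda>. real_of_int (\<eta> v))"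

definition conf_off :: "site set \<Rightarrow> config \<Rightarrow> config set" where
  "conf_off \<Lambda> \<omega> = {\<eta>\<in>Omega. \<forall>v. v \<notin> \<Lambda> \<longrightarrow> \<eta> v = \<omega> v}"

definition spec :: "real \<Rightarrow> real \<Rightarrow> real \<Rightarrow> site set \<Rightarrow> config set \<Rightarrow> config \<Rightarrow> real" where
  "spec K T h \<Lambda> B \<omega> =
     (\<Sum>\<eta>\<in>conf_off \<Lambda> \<omega>. exp (- local_energy h \<Lambda> \<eta> / (K * T)) * indicator B \<eta>) /
     (\<Sum>\<eta>\<in>conf_off \<Lambda> \<omega>. exp (- local_energy h \<Lambda> \<eta> / (K * T)))"

definition gibbs_measure :: "real \<Rightarrow> real \<Rightarrow> real \<Rightarrow> config measure \<Rightarrow> bool" where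
  "gibbs_measure K T h \<mu> \<longleftrightarrow> sets \<mu> = sets config_space \<and> prob_space \<mu> \<and>
     (\<forall>\<Lambda> B. finite \<Lambda> \<longrightarrow> B \<in> sets config_space \<longrightarrow>
        measure \<mu> B = (\<integral>\<omega>. spec K T h \<Lambda> B \<omega> \<partial>\<mu>))"

text \<open>mu_{T,h}: the (for T > T_c unique) Gibbs measure.\<close>
definition mu_inf :: "real \<Rightarrow> real \<Rightarrow> real \<Rightarrow> config measure" where
  "mu_inf K T h = (THE \<mu>. gibbs_measure K T h \<mu>)"

definition T_c :: "real \<Rightarrow> real" where
  "T_c K = Sup {T. T > 0 \<and> (\<exists>\<mu>1 \<mu>2. gibbs_measure K T 0 \<mu>1 \<and> gibbs_measure K T 0 \<mu>2 \<and> \<mu>1 \<noteq> \<mu>2)}"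

definition plus_cluster :: "config \<Rightarrow> site set" where
  "plus_cluster \<omega> = (if \<omega> (0,0) = 1 then
      {v. ((0,0), v) \<in> {(u,w). adj u w \<and> \<omega> u = 1 \<and> \<omega> w = 1}\<^sup>*} else {})"

definition h_c :: "real \<Rightarrow> real \<Rightarrow> real" where
  "h_c K T = Inf {h. measure (mu_inf K T h) {\<omega>\<in>Omega. infinite (plus_cluster \<omega>)} > 0}"

end

theory Submission
  imports Defs
begin

text \<open>On the torus the configurations form the finite distributive lattice of subsets of the box,
  and the Gibbs weight is log-supermodular there, so by the Ahlswede--Daykin (FKG) inequality
  increasing functions are positively correlated. Moving the field along h(t) differentiates
  \<mu>(A) into |h - h_c| / (KT) times the covariance of 1_A with the magnetization, a sum of
  nonnegative covariances Cov(1_A, \<omega>_v). For v in the support of A one splits 1_A into the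
  increasing indicator of "A holds with \<omega>_v = -1", whose covariance with \<omega>_v is nonnegative,
  and the indicator of A \<inter> \<Delta>_v A, on which \<omega>_v = 1; the latter contributes twice
  \<mu>(A \<inter> \<Delta>_v A) \<mu>(\<omega>_v = -1), and by the finite-energy bound \<mu>(\<omega>_v = -1) is bounded
  below uniformly in N and in the field along the path.\<close>

section \<open>The Ahlswede--Daykin and FKG inequalities on a powerset\<close>

lemma ahlswede_daykin_two_point:
  fixes a0 a1 b0 b1 c0 c1 d0 d1 :: real
  assumes nn: "0 \<le> a0" "0 \<le> a1" "0 \<le> b0" "0 \<le> b1" "0 \<le> c0" "0 \<le> c1" "0 \<le> d0" "0 \<le> d1"
    and h1: "a0*b0 \<le> c0*d0" and h2: "a1*b0 \<le> c1*d0" and h3: "a0*b1 \<le> c1*d0" and h4: "a1*b1 \<le> c1*d1"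
  shows "(a0+a1)*(b0+b1) \<le> (c0+c1)*(d0+d1)"
proof -
  have cross: "a0*b1 + a1*b0 \<le> c0*d1 + c1*d0"
  proof (cases "c1*d0 = 0")
    case True
    then have "a0*b1 = 0" "a1*b0 = 0" using h2 h3 nn by (metis mult_nonneg_nonneg order_antisym)+
    moreover have "0 \<le> c0*d1" using nn by simp
    ultimately show ?thesis using True by linarith
  next
    case False
    define u where "u = c1*d0"
    define x where "x = a0*b1"
    define y where "y = a1*b0"
    have u: "u > 0" using False nn unfolding u_def by (simp add: less_le)
    have "x*y = (a0*b0)*(a1*b1)" unfolding x_def y_def by (simp add: algebra_simps)
    also have "\<dots> \<le> (c0*d0)*(c1*d1)" using mult_mono[OF h1 h4] nn by auto
    also have "\<dots> = u * (c0*d1)" unfolding u_def by (simp add: algebra_simps)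
    finally have xy: "x*y \<le> u*(c0*d1)" .
    have "0 \<le> (u-x)*(u-y)" using h2 h3 unfolding x_def y_def u_def by simp
    then have "u*(x+y) \<le> u*(u + c0*d1)" using xy by (simp add: algebra_simps)
    then have "x + y \<le> u + c0*d1" using u by (simp add: mult_le_cancel_left_pos)
    then show ?thesis unfolding x_def y_def u_def by simp
  qed
  show ?thesis using h1 h4 cross by (simp add: algebra_simps)
qed

lemma sum_Pow_insert:
  assumes "finite S" "x \<notin> S"
  shows "(\<Sum>X\<in>Pow (insert x S). f X) = (\<Sum>X\<in>Pow S. f X + f (insert x X))"
proof -
  have "(\<Sum>X\<in>Pow (insert x S). f X) = (\<Sum>X\<in>Pow S. f X) + (\<Sum>X\<in>insert x ` Pow S. f X)"
    unfolding Pow_insert by (rule sum.union_disjoint) (use assms in auto)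
  also have "(\<Sum>X\<in>insert x ` Pow S. f X) = (\<Sum>X\<in>Pow S. f (insert x X))"
    by (rule sum.reindex_cong[where l="insert x"]) (use assms in \<open>auto simp: inj_on_def\<close>)
  finally show ?thesis by (simp add: sum.distrib)
qed

theorem ahlswede_daykin:
  fixes \<alpha> \<beta> \<gamma> \<delta> :: "'a set \<Rightarrow> real"
  assumes "finite S"
    and "\<And>X. X \<subseteq> S \<Longrightarrow> 0 \<le> \<alpha> X" "\<And>X. X \<subseteq> S \<Longrightarrow> 0 \<le> \<beta> X"
    and "\<And>X. X \<subseteq> S \<Longrightarrow> 0 \<le> \<gamma> X" "\<And>X. X \<subseteq> S \<Longrightarrow> 0 \<le> \<delta> X"
    and "\<And>X Y. X \<subseteq> S \<Longrightarrow> Y \<subseteq> S \<Longrightarrow> \<alpha> X * \<beta> Y \<le> \<gamma> (X \<union> Y) * \<delta> (X \<inter> Y)"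
  shows "sum \<alpha> (Pow S) * sum \<beta> (Pow S) \<le> sum \<gamma> (Pow S) * sum \<delta> (Pow S)"
  using assms
proof (induction S arbitrary: \<alpha> \<beta> \<gamma> \<delta> rule: finite_induct)
  case empty
  then show ?case by simp
next
  case (insert x S)
  let ?a = "\<lambda>X. \<alpha> X + \<alpha> (insert x X)"
  let ?b = "\<lambda>X. \<beta> X + \<beta> (insert x X)"
  let ?c = "\<lambda>X. \<gamma> X + \<gamma> (insert x X)"
  let ?d = "\<lambda>X. \<delta> X + \<delta> (insert x X)"
  have "sum ?a (Pow S) * sum ?b (Pow S) \<le> sum ?c (Pow S) * sum ?d (Pow S)"
  proof (rule insert.IH)
    fix X Y assume X: "X \<subseteq> S" and Y: "Y \<subseteq> S"
    have xX: "x \<notin> X" and xY: "x \<notin> Y" using X Y insert.hyps by auto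
    show "?a X * ?b Y \<le> ?c (X \<union> Y) * ?d (X \<inter> Y)"
    proof (rule ahlswede_daykin_two_point)
      show "\<alpha> X * \<beta> Y \<le> \<gamma> (X \<union> Y) * \<delta> (X \<inter> Y)"
        using insert.prems(5) X Y by (meson subset_insertI2)
      show "\<alpha> (insert x X) * \<beta> Y \<le> \<gamma> (insert x (X \<union> Y)) * \<delta> (X \<inter> Y)"
        using insert.prems(5)[of "insert x X" Y] X Y xY by (auto simp: Int_insert_left)
      show "\<alpha> X * \<beta> (insert x Y) \<le> \<gamma> (insert x (X \<union> Y)) * \<delta> (X \<inter> Y)"
        using insert.prems(5)[of X "insert x Y"] X Y xX by (auto simp: Int_insert_right)
      show "\<alpha> (insert x X) * \<beta> (insert x Y) \<le> \<gamma> (insert x (X \<union> Y)) * \<delta> (insert x (X \<inter> Y))"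
        using insert.prems(5)[of "insert x X" "insert x Y"] X Y by auto
    qed (rule insert.prems; use X Y in auto)+
  qed (intro add_nonneg_nonneg insert.prems; auto)+
  then show ?case using insert.hyps by (simp add: sum_Pow_insert)
qed

theorem fkg_Pow:
  fixes w f g :: "'a set \<Rightarrow> real"
  assumes "finite S"
    and w0: "\<And>X. X \<subseteq> S \<Longrightarrow> 0 \<le> w X"
    and f0: "\<And>X. X \<subseteq> S \<Longrightarrow> 0 \<le> f X" and g0: "\<And>X. X \<subseteq> S \<Longrightarrow> 0 \<le> g X"
    and log_supermodular: "\<And>X Y. X \<subseteq> S \<Longrightarrow> Y \<subseteq> S \<Longrightarrow> w X * w Y \<le> w (X \<union> Y) * w (X \<inter> Y)"
    and f_mono: "\<And>X Y. X \<subseteq> Y \<Longrightarrow> Y \<subseteq> S \<Longrightarrow> f X \<le> f Y"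
    and g_mono: "\<And>X Y. X \<subseteq> Y \<Longrightarrow> Y \<subseteq> S \<Longrightarrow> g X \<le> g Y"
  shows "(\<Sum>X\<in>Pow S. w X * f X) * (\<Sum>X\<in>Pow S. w X * g X)
       \<le> (\<Sum>X\<in>Pow S. w X * f X * g X) * (\<Sum>X\<in>Pow S. w X)"
proof (rule ahlswede_daykin[OF assms(1)])
  fix X Y assume X: "X \<subseteq> S" and Y: "Y \<subseteq> S"
  have "(w X * w Y) * (f X * g Y) \<le> (w (X \<union> Y) * w (X \<inter> Y)) * (f (X \<union> Y) * g (X \<union> Y))"
  proof (rule mult_mono)
    show "f X * g Y \<le> f (X \<union> Y) * g (X \<union> Y)"
      using f_mono[of X "X \<union> Y"] g_mono[of Y "X \<union> Y"] X Y f0 g0 by (intro mult_mono) auto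
  qed (use X Y log_supermodular in \<open>auto intro!: mult_nonneg_nonneg w0 f0 g0\<close>)
  then show "w X * f X * (w Y * g Y) \<le> w (X \<union> Y) * f (X \<union> Y) * g (X \<union> Y) * w (X \<inter> Y)"
    by (simp add: algebra_simps)
qed (use w0 f0 g0 in \<open>auto intro: mult_nonneg_nonneg\<close>)

section \<open>Torus configurations and the lattice property of the Gibbs weight\<close>

definition config_of_set :: "site set \<Rightarrow> config" where
  "config_of_set X = (\<lambda>v. if v \<in> X then 1 else -1)"

lemma inj_config_of_set: "inj config_of_set"
  by (rule injI) (auto simp: config_of_set_def fun_eq_iff split: if_splits)

lemma config_of_set_mono: "X \<subseteq> Y \<Longrightarrow> config_of_set X \<le> config_of_set Y"
  by (auto simp: config_of_set_def le_fun_def)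

lemma finite_tbox: "finite (tbox N)"
  unfolding tbox_def by simp

lemma TConf_spin: "\<omega> \<in> TConf N \<Longrightarrow> \<omega> v = 1 \<or> \<omega> v = -1"
  unfolding TConf_def by (cases "v \<in> tbox N"; cases v) auto

lemma TConf_eq_image: "TConf N = config_of_set ` Pow (tbox N)"
proof (intro equalityI subsetI)
  fix \<omega> assume \<omega>: "\<omega> \<in> TConf N"
  have "\<omega> = config_of_set {v\<in>tbox N. \<omega> v = 1}"
    using \<omega> TConf_spin[OF \<omega>] unfolding TConf_def config_of_set_def by fastforce
  then show "\<omega> \<in> config_of_set ` Pow (tbox N)" by blast
qed (auto simp: TConf_def config_of_set_def split: if_splits)

lemma finite_TConf: "finite (TConf N)"
  unfolding TConf_eq_image using finite_tbox by simp

lemma sum_TConf_eq_sum_Pow: "(\<Sum>\<omega>\<in>TConf N. F \<omega>) = (\<Sum>X\<in>Pow (tbox N). F (config_of_set X))"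
  unfolding TConf_eq_image by (simp add: sum.reindex[OF inj_on_subset[OF inj_config_of_set]])

lemma TConf_subset_Omega: "TConf N \<subseteq> Omega"
  unfolding Omega_def using TConf_spin by blast

definition torus_right :: "nat \<Rightarrow> site \<Rightarrow> site" where
  "torus_right N p = (wrap N (fst p + 1), snd p)"

definition torus_up :: "nat \<Rightarrow> site \<Rightarrow> site" where
  "torus_up N p = (fst p, wrap N (snd p + 1))"

lemma wrap_succ_inj_on: "inj_on (\<lambda>x. wrap N (x + 1)) {-int N + 1..int N}"
proof (rule inj_onI)
  fix x x' assume x: "x \<in> {-int N + 1..int N}" and x': "x' \<in> {-int N + 1..int N}"
    and eq: "wrap N (x + 1) = wrap N (x' + 1)"
  then have "(x + int N) mod (2 * int N) = (x' + int N) mod (2 * int N)"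
    unfolding wrap_def by (simp add: algebra_simps)
  then have "2 * int N dvd x - x'"
    by (simp add: mod_eq_dvd_iff)
  moreover have "\<bar>x - x'\<bar> < 2 * int N" using x x' by auto
  ultimately show "x = x'" using dvd_imp_le_int[of "x - x'" "2 * int N"] by auto
qed

lemma inj_on_torus_right: "inj_on (torus_right N) (tbox N)"
  using wrap_succ_inj_on[of N] unfolding tbox_def torus_right_def inj_on_def by auto

lemma inj_on_torus_up: "inj_on (torus_up N) (tbox N)"
  using wrap_succ_inj_on[of N] unfolding tbox_def torus_up_def inj_on_def by auto

definition site_bonds :: "nat \<Rightarrow> config \<Rightarrow> site \<Rightarrow> real" where
  "site_bonds N \<omega> p = real_of_int (\<omega> p * \<omega> (torus_right N p) + \<omega> p * \<omega> (torus_up N p))"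

definition bond_sum :: "nat \<Rightarrow> config \<Rightarrow> real" where
  "bond_sum N \<omega> = (\<Sum>p\<in>tbox N. site_bonds N \<omega> p)"

definition magnetization :: "nat \<Rightarrow> config \<Rightarrow> real" where
  "magnetization N \<omega> = (\<Sum>v\<in>tbox N. real_of_int (\<omega> v))"

lemma torus_weight_eq:
  "torus_weight K T h N \<omega> = exp ((bond_sum N \<omega> + h * magnetization N \<omega>) / (K * T))"
  unfolding torus_weight_def torus_energy_def bond_sum_def site_bonds_def magnetization_def
    torus_right_def torus_up_def
  by (simp add: split_def minus_divide_left)

lemma config_of_set_product_supermodular:
  "config_of_set X p * config_of_set X q + config_of_set Y p * config_of_set Y q
   \<le> config_of_set (X \<union> Y) p * config_of_set (X \<union> Y) q
     + config_of_set (X \<inter> Y) p * config_of_set (X \<inter> Y) q"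
  by (auto simp: config_of_set_def)

lemma bond_sum_supermodular:
  "bond_sum N (config_of_set X) + bond_sum N (config_of_set Y)
   \<le> bond_sum N (config_of_set (X \<union> Y)) + bond_sum N (config_of_set (X \<inter> Y))"
  unfolding bond_sum_def sum.distrib[symmetric]
proof (rule sum_mono)
  fix p
  show "site_bonds N (config_of_set X) p + site_bonds N (config_of_set Y) p
    \<le> site_bonds N (config_of_set (X \<union> Y)) p + site_bonds N (config_of_set (X \<inter> Y)) p"
    using config_of_set_product_supermodular[of X p "torus_right N p" Y]
      config_of_set_product_supermodular[of X p "torus_up N p" Y]
    unfolding site_bonds_def by linarith
qed

lemma magnetization_modular:
  "magnetization N (config_of_set X) + magnetization N (config_of_set Y)
   = magnetization N (config_of_set (X \<union> Y)) + magnetization N (config_of_set (X \<inter> Y))"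
  unfolding magnetization_def sum.distrib[symmetric]
  by (rule sum.cong) (auto simp: config_of_set_def)

lemma torus_weight_log_supermodular:
  assumes "0 < K * T"
  shows "torus_weight K T h N (config_of_set X) * torus_weight K T h N (config_of_set Y)
    \<le> torus_weight K T h N (config_of_set (X \<union> Y)) * torus_weight K T h N (config_of_set (X \<inter> Y))"
proof -
  have "h * magnetization N (config_of_set X) + h * magnetization N (config_of_set Y)
      = h * magnetization N (config_of_set (X \<union> Y)) + h * magnetization N (config_of_set (X \<inter> Y))"
    using magnetization_modular[of N X Y] by (simp add: distrib_left[symmetric])
  then show ?thesis
    using bond_sum_supermodular[of N X Y] assms
    unfolding torus_weight_eq exp_add[symmetric]
    by (simp add: add_divide_distrib[symmetric] divide_right_mono)
qed

section \<open>Finite energy\<close>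

lemma flip_in_TConf: "v \<in> tbox N \<Longrightarrow> \<omega> \<in> TConf N \<Longrightarrow> flip v \<omega> \<in> TConf N"
  unfolding TConf_def flip_def by auto

lemma flip_in_Omega: "\<omega> \<in> Omega \<Longrightarrow> flip v \<omega> \<in> Omega"
  unfolding Omega_def flip_def by auto

lemma flip_flip [simp]: "flip v (flip v \<omega>) = \<omega>"
  unfolding flip_def by (auto simp: fun_eq_iff)

lemma flip_same [simp]: "flip v \<omega> v = - \<omega> v"
  unfolding flip_def by simp

lemma magnetization_flip:
  assumes "v \<in> tbox N"
  shows "magnetization N (flip v \<omega>) = magnetization N \<omega> - 2 * real_of_int (\<omega> v)"
proof -
  have "(\<Sum>p\<in>tbox N - {v}. real_of_int (flip v \<omega> p)) = (\<Sum>p\<in>tbox N - {v}. real_of_int (\<omega> p))"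
    by (rule sum.cong) (auto simp: flip_def)
  then show ?thesis
    using assms unfolding magnetization_def by (simp add: sum.remove[OF finite_tbox])
qed

lemma site_bonds_abs_le: "\<omega> \<in> TConf N \<Longrightarrow> \<bar>site_bonds N \<omega> p\<bar> \<le> 2"
  using TConf_spin[of \<omega> N p] TConf_spin[of \<omega> N "torus_right N p"] TConf_spin[of \<omega> N "torus_up N p"]
  unfolding site_bonds_def by auto

text \<open>The spin at v enters the bonds of at most three sites, v and its left and lower neighbours
  (unique by injectivity of the torus shifts), each of which changes by at most 4.\<close>
lemma bond_sum_flip_ge:
  assumes v: "v \<in> tbox N" and \<omega>: "\<omega> \<in> TConf N"
  shows "bond_sum N \<omega> - 12 \<le> bond_sum N (flip v \<omega>)"
proof -
  define d where "d p = site_bonds N (flip v \<omega>) p - site_bonds N \<omega> p" for p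
  define S where "S = tbox N \<inter> ({v} \<union> torus_right N -` {v} \<union> torus_up N -` {v})"
  have "card S \<le> card ({v} \<union> (torus_right N -` {v} \<inter> tbox N) \<union> (torus_up N -` {v} \<inter> tbox N))"
    by (rule card_mono) (auto simp: S_def finite_tbox)
  also have "\<dots> \<le> card {v} + card (torus_right N -` {v} \<inter> tbox N) + card (torus_up N -` {v} \<inter> tbox N)"
    by (meson card_Un_le add_right_mono order_trans)
  also have "\<dots> \<le> 3"
    using card_vimage_inj_on_le[OF inj_on_torus_right, of "{v}" N]
      card_vimage_inj_on_le[OF inj_on_torus_up, of "{v}" N] by simp
  finally have card_S: "card S \<le> 3" .
  have "sum d (tbox N) = sum d S"
    by (rule sum.mono_neutral_right) (auto simp: finite_tbox S_def d_def site_bonds_def flip_def)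
  then have diff: "bond_sum N (flip v \<omega>) - bond_sum N \<omega> = sum d S"
    unfolding bond_sum_def d_def by (simp add: sum_subtractf)
  have "-4 \<le> d p" for p
    using site_bonds_abs_le[OF flip_in_TConf[OF v \<omega>], of p] site_bonds_abs_le[OF \<omega>, of p]
    unfolding d_def by linarith
  then have "real (card S) * (-4) \<le> sum d S" by (rule sum_bounded_below)
  then show ?thesis using diff card_S by linarith
qed

lemma torus_weight_flip_ge:
  assumes v: "v \<in> tbox N" and \<omega>: "\<omega> \<in> TConf N" and KT: "0 < K * T"
  shows "exp (- (12 + 2 * \<bar>h\<bar>) / (K * T)) * torus_weight K T h N \<omega> \<le> torus_weight K T h N (flip v \<omega>)"
proof -
  have "\<bar>h * (2 * real_of_int (\<omega> v))\<bar> = 2 * \<bar>h\<bar>"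
    using TConf_spin[OF \<omega>, of v] by (auto simp: abs_mult)
  then have "h * magnetization N \<omega> - 2 * \<bar>h\<bar> \<le> h * magnetization N (flip v \<omega>)"
    unfolding magnetization_flip[OF v] by (simp add: right_diff_distrib)
  then have "(bond_sum N \<omega> + h * magnetization N \<omega>) - (12 + 2 * \<bar>h\<bar>)
      \<le> bond_sum N (flip v \<omega>) + h * magnetization N (flip v \<omega>)"
    using bond_sum_flip_ge[OF v \<omega>] by linarith
  then have "(bond_sum N \<omega> + h * magnetization N \<omega>) / (K * T) + - (12 + 2 * \<bar>h\<bar>) / (K * T)
      \<le> (bond_sum N (flip v \<omega>) + h * magnetization N (flip v \<omega>)) / (K * T)"
    using KT by (simp add: divide_right_mono add_divide_distrib[symmetric] diff_divide_distrib[symmetric])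
  then show ?thesis unfolding torus_weight_eq by (simp add: exp_add[symmetric] mult.commute)
qed

definition torus_sum :: "real \<Rightarrow> real \<Rightarrow> real \<Rightarrow> nat \<Rightarrow> (config \<Rightarrow> real) \<Rightarrow> real" where
  "torus_sum K T h N f = (\<Sum>\<omega>\<in>TConf N. torus_weight K T h N \<omega> * f \<omega>)"

text \<open>The covariance of f and g under the periodic measure, multiplied by the squared partition
  function.\<close>
definition torus_cov ::
    "real \<Rightarrow> real \<Rightarrow> real \<Rightarrow> nat \<Rightarrow> (config \<Rightarrow> real) \<Rightarrow> (config \<Rightarrow> real) \<Rightarrow> real" where
  "torus_cov K T h N f g =
     torus_sum K T h N (\<lambda>\<omega>. f \<omega> * g \<omega>) * torus_sum K T h N (\<lambda>_. 1)
     - torus_sum K T h N f * torus_sum K T h N g"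

lemma per_measure_eq_torus_sum:
  "per_measure K T h N B = torus_sum K T h N (indicator B) / torus_sum K T h N (\<lambda>_. 1)"
  unfolding per_measure_def torus_sum_def by simp

lemma torus_sum_cong:
  "(\<And>\<omega>. \<omega> \<in> TConf N \<Longrightarrow> f \<omega> = g \<omega>) \<Longrightarrow> torus_sum K T h N f = torus_sum K T h N g"
  unfolding torus_sum_def by simp

lemma torus_sum_add: "torus_sum K T h N (\<lambda>\<omega>. f \<omega> + g \<omega>) = torus_sum K T h N f + torus_sum K T h N g"
  unfolding torus_sum_def by (simp add: distrib_left sum.distrib)

lemma torus_sum_diff: "torus_sum K T h N (\<lambda>\<omega>. f \<omega> - g \<omega>) = torus_sum K T h N f - torus_sum K T h N g"
  unfolding torus_sum_def by (simp add: right_diff_distrib sum_subtractf)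

lemma torus_sum_cmult: "torus_sum K T h N (\<lambda>\<omega>. c * f \<omega>) = c * torus_sum K T h N f"
  unfolding torus_sum_def by (simp add: sum_distrib_left mult.left_commute)

lemma torus_sum_sum:
  "torus_sum K T h N (\<lambda>\<omega>. \<Sum>u\<in>U. f u \<omega>) = (\<Sum>u\<in>U. torus_sum K T h N (f u))"
  unfolding torus_sum_def by (simp add: sum_distrib_left sum.swap[of _ "TConf N"])

lemma torus_sum_nonneg:
  "(\<And>\<omega>. \<omega> \<in> TConf N \<Longrightarrow> 0 \<le> f \<omega>) \<Longrightarrow> 0 \<le> torus_sum K T h N f"
  unfolding torus_sum_def torus_weight_def by (simp add: sum_nonneg)

lemma torus_sum_one_pos: "0 < torus_sum K T h N (\<lambda>_. 1)"
  unfolding torus_sum_def torus_weight_def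
  by (rule sum_pos[OF finite_TConf]) (auto simp: TConf_eq_image)

lemma torus_cov_cong_left:
  "(\<And>\<omega>. \<omega> \<in> TConf N \<Longrightarrow> f \<omega> = f' \<omega>) \<Longrightarrow> torus_cov K T h N f g = torus_cov K T h N f' g"
  unfolding torus_cov_def by (simp cong: torus_sum_cong)

lemma torus_cov_add_left:
  "torus_cov K T h N (\<lambda>\<omega>. f \<omega> + f' \<omega>) g = torus_cov K T h N f g + torus_cov K T h N f' g"
  unfolding torus_cov_def by (simp add: distrib_right torus_sum_add algebra_simps)

lemma torus_cov_const_add_right:
  "torus_cov K T h N f (\<lambda>\<omega>. c + g \<omega>) = torus_cov K T h N f g"
  using torus_sum_cmult[of K T h N c "\<lambda>_. 1"]
  unfolding torus_cov_def by (simp add: distrib_left torus_sum_add torus_sum_cmult algebra_simps)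

lemma torus_cov_sum_right:
  "torus_cov K T h N f (\<lambda>\<omega>. \<Sum>u\<in>U. g u \<omega>) = (\<Sum>u\<in>U. torus_cov K T h N f (g u))"
  unfolding torus_cov_def
  by (simp add: sum_distrib_left sum_distrib_right torus_sum_sum sum_subtractf)

theorem torus_fkg:
  assumes KT: "0 < K * T"
    and "mono_on (TConf N) f" "mono_on (TConf N) g"
    and "\<And>\<omega>. \<omega> \<in> TConf N \<Longrightarrow> 0 \<le> f \<omega>" "\<And>\<omega>. \<omega> \<in> TConf N \<Longrightarrow> 0 \<le> g \<omega>"
  shows "0 \<le> torus_cov K T h N f g"
proof -
  define w where "w X = torus_weight K T h N (config_of_set X)" for X
  have in_TConf: "X \<subseteq> tbox N \<Longrightarrow> config_of_set X \<in> TConf N" for X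
    by (auto simp: TConf_eq_image)
  have "(\<Sum>X\<in>Pow (tbox N). w X * f (config_of_set X)) * (\<Sum>X\<in>Pow (tbox N). w X * g (config_of_set X))
     \<le> (\<Sum>X\<in>Pow (tbox N). w X * f (config_of_set X) * g (config_of_set X)) * (\<Sum>X\<in>Pow (tbox N). w X)"
  proof (rule fkg_Pow[OF finite_tbox])
    show "w X * w Y \<le> w (X \<union> Y) * w (X \<inter> Y)" for X Y
      unfolding w_def by (rule torus_weight_log_supermodular[OF KT])
    show "f (config_of_set X) \<le> f (config_of_set Y)" "g (config_of_set X) \<le> g (config_of_set Y)"
      if "X \<subseteq> Y" "Y \<subseteq> tbox N" for X Y
      using that assms(2,3) in_TConf config_of_set_mono by (auto elim!: mono_onD)
  qed (use assms(4,5) in_TConf in \<open>auto simp: w_def torus_weight_def\<close>)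
  then show ?thesis
    unfolding torus_cov_def torus_sum_def sum_TConf_eq_sum_Pow w_def by (simp add: mult.assoc)
qed

lemma mono_on_indicator: "increasing A \<Longrightarrow> mono_on Omega (indicator A :: config \<Rightarrow> real)"
  unfolding increasing_def by (auto intro!: mono_onI simp: indicator_def le_fun_def)

lemma torus_cov_spin_nonneg:
  assumes KT: "0 < K * T" and "mono_on (TConf N) f" and "\<And>\<omega>. \<omega> \<in> TConf N \<Longrightarrow> 0 \<le> f \<omega>"
  shows "0 \<le> torus_cov K T h N f (\<lambda>\<omega>. real_of_int (\<omega> u))"
proof -
  have "0 \<le> torus_cov K T h N f (\<lambda>\<omega>. 1 + real_of_int (\<omega> u))"
  proof (rule torus_fkg[OF KT assms(2)])
    show "mono_on (TConf N) (\<lambda>\<omega>. 1 + real_of_int (\<omega> u))"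
      by (rule mono_onI) (simp add: le_funD)
    show "0 \<le> 1 + real_of_int (\<omega> u)" if "\<omega> \<in> TConf N" for \<omega>
      using TConf_spin[OF that, of u] by auto
  qed (use assms(3) in auto)
  then show ?thesis by (simp only: torus_cov_const_add_right)
qed

text \<open>The flip at v exchanges the configurations with spin 1 and spin -1 at v and lowers weights
  by at most the factor c, so the minus configurations carry at least c times the weight of
  the plus ones.\<close>
lemma torus_sum_spin_down_ge:
  assumes v: "v \<in> tbox N" and KT: "0 < K * T"
  shows "exp (- (12 + 2 * \<bar>h\<bar>) / (K * T)) * torus_sum K T h N (\<lambda>_. 1)
    \<le> torus_sum K T h N (\<lambda>\<omega>. 1 - real_of_int (\<omega> v))"
proof -
  define c where "c = exp (- (12 + 2 * \<bar>h\<bar>) / (K * T))"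
  define W where "W = torus_weight K T h N"
  define up where "up = torus_sum K T h N (\<lambda>\<omega>. 1 + real_of_int (\<omega> v))"
  define down where "down = torus_sum K T h N (\<lambda>\<omega>. 1 - real_of_int (\<omega> v))"
  have "c \<le> 1" unfolding c_def using KT by (simp add: divide_nonpos_pos)
  have "c * up = (\<Sum>\<omega>\<in>TConf N. c * W \<omega> * (1 + real_of_int (\<omega> v)))"
    unfolding up_def torus_sum_def W_def by (simp add: sum_distrib_left mult.assoc)
  also have "\<dots> \<le> (\<Sum>\<omega>\<in>TConf N. W (flip v \<omega>) * (1 + real_of_int (\<omega> v)))"
  proof (rule sum_mono)
    fix \<omega> assume \<omega>: "\<omega> \<in> TConf N"
    have "0 \<le> 1 + real_of_int (\<omega> v)" using TConf_spin[OF \<omega>, of v] by auto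
    then show "c * W \<omega> * (1 + real_of_int (\<omega> v)) \<le> W (flip v \<omega>) * (1 + real_of_int (\<omega> v))"
      using torus_weight_flip_ge[OF v \<omega> KT, of h] unfolding c_def W_def by (rule mult_right_mono[rotated])
  qed
  also have "\<dots> = down"
    unfolding down_def torus_sum_def W_def
    by (rule sum.reindex_bij_witness[where i="flip v" and j="flip v"]) (auto simp: flip_in_TConf[OF v])
  finally have "c * up \<le> down" .
  moreover have "c * down \<le> down"
    using \<open>c \<le> 1\<close> unfolding down_def
    by (intro mult_left_le_one_le torus_sum_nonneg; auto simp: c_def dest: TConf_spin[of _ N v])
  ultimately have "c * (up + down) \<le> 2 * down" by (simp add: distrib_left)
  moreover have "up + down = 2 * torus_sum K T h N (\<lambda>_. 1)"
    unfolding up_def down_def torus_sum_add[symmetric] by (simp add: torus_sum_cmult[symmetric])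
  ultimately show ?thesis unfolding c_def down_def by simp
qed

section \<open>Pivotal sites of increasing events\<close>

lemma Sbox_subset_tbox: "n < N \<Longrightarrow> Sbox n \<subseteq> tbox N"
  unfolding Sbox_def tbox_def by auto

lemma Supp_subset: "F_meas V A \<Longrightarrow> Supp A \<subseteq> V"
proof
  fix v assume FA: "F_meas V A" and "v \<in> Supp A"
  then obtain \<omega> where \<omega>: "\<omega> \<in> Omega" and pivot: "indicator A \<omega> + indicator A (flip v \<omega>) = (1::real)"
    unfolding Supp_def Delta_def by auto
  show "v \<in> V"
  proof (rule ccontr)
    assume "v \<notin> V"
    then have "\<forall>u\<in>V. \<omega> u = flip v \<omega> u" unfolding flip_def by auto
    then have "\<omega> \<in> A \<longleftrightarrow> flip v \<omega> \<in> A" using FA \<omega> flip_in_Omega[OF \<omega>] unfolding F_meas_def by blast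
    then show False using pivot by (auto simp: indicator_def split: if_splits)
  qed
qed

lemma pivotal_spin_plus:
  assumes "increasing A" and "\<omega> \<in> A \<inter> Delta v A"
  shows "\<omega> v = 1"
proof (rule ccontr)
  assume "\<omega> v \<noteq> 1"
  moreover have \<omega>: "\<omega> \<in> Omega" using assms(2) by (simp add: Delta_def)
  ultimately have "\<omega> v = -1" unfolding Omega_def by blast
  then have "\<omega> \<le> flip v \<omega>" unfolding flip_def le_fun_def by simp
  then have "flip v \<omega> \<in> A" using assms flip_in_Omega[OF \<omega>] unfolding increasing_def le_fun_def by blast
  then show False using assms(2) unfolding Delta_def by (auto simp: indicator_def)
qed

lemma indicator_split_pivotal:
  "\<omega> \<in> Omega \<Longrightarrow> (indicator A \<omega> :: real)
     = indicator {\<omega>\<in>A. flip v \<omega> \<in> A} \<omega> + indicator (A \<inter> Delta v A) \<omega>"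
  unfolding Delta_def by (auto simp: indicator_def)

text \<open>For increasing A, the event that A survives flipping v is the event that A holds with the
  spin at v set to -1.\<close>
lemma mono_on_indicator_flip_closed:
  assumes inc: "increasing A"
  shows "mono_on Omega (indicator {\<omega>\<in>A. flip v \<omega> \<in> A} :: config \<Rightarrow> real)"
proof (rule mono_onI)
  fix \<omega> \<omega>' assume \<omega>: "\<omega> \<in> Omega" and \<omega>': "\<omega>' \<in> Omega" and le: "\<omega> \<le> \<omega>'"
  show "indicator {\<omega>\<in>A. flip v \<omega> \<in> A} \<omega> \<le> (indicator {\<omega>\<in>A. flip v \<omega> \<in> A} \<omega>' :: real)"
  proof (cases "\<omega> \<in> A \<and> flip v \<omega> \<in> A")
    case True
    define \<omega>0 where "\<omega>0 = fun_upd \<omega> v (-1)"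
    have "\<omega> v = 1 \<or> \<omega> v = -1" "\<omega>' v = 1 \<or> \<omega>' v = -1" using \<omega> \<omega>' unfolding Omega_def by blast+
    then have "\<omega>0 = \<omega> \<or> \<omega>0 = flip v \<omega>" "\<omega>0 \<le> flip v \<omega>'"
      using le unfolding \<omega>0_def flip_def le_fun_def by auto
    then have "flip v \<omega>' \<in> A"
      using True inc flip_in_Omega[OF \<omega>'] unfolding increasing_def le_fun_def by blast
    moreover have "\<omega>' \<in> A" using True inc \<omega>' le unfolding increasing_def le_fun_def by blast
    ultimately show ?thesis by simp
  qed simp
qed

lemma torus_cov_spin_ge_pivotal:
  assumes KT: "0 < K * T" and inc: "increasing A" and v: "v \<in> tbox N"
    and C: "0 \<le> C" "C \<le> exp (- (12 + 2 * \<bar>h\<bar>) / (K * T))"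
  shows "C * torus_sum K T h N (\<lambda>_. 1) * torus_sum K T h N (indicator (A \<inter> Delta v A))
    \<le> torus_cov K T h N (indicator A) (\<lambda>\<omega>. real_of_int (\<omega> v))"
proof -
  define B where "B = {\<omega>\<in>A. flip v \<omega> \<in> A}"
  define P where "P = A \<inter> Delta v A"
  let ?Z = "torus_sum K T h N (\<lambda>_. 1)" and ?s = "\<lambda>\<omega>. real_of_int (\<omega> v)"
  have "torus_cov K T h N (indicator A) ?s = torus_cov K T h N (\<lambda>\<omega>. indicator B \<omega> + indicator P \<omega>) ?s"
    using indicator_split_pivotal TConf_subset_Omega unfolding B_def P_def
    by (blast intro: torus_cov_cong_left)
  also have "\<dots> = torus_cov K T h N (indicator B) ?s + torus_cov K T h N (indicator P) ?s"
    by (rule torus_cov_add_left)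
  also have "torus_cov K T h N (indicator P) ?s = torus_sum K T h N (indicator P) * torus_sum K T h N (\<lambda>\<omega>. 1 - ?s \<omega>)"
  proof -
    have "torus_sum K T h N (\<lambda>\<omega>. indicator P \<omega> * ?s \<omega>) = torus_sum K T h N (indicator P)"
      using pivotal_spin_plus[OF inc] unfolding P_def by (intro torus_sum_cong) (auto simp: indicator_def)
    then show ?thesis unfolding torus_cov_def torus_sum_diff by (simp add: algebra_simps)
  qed
  finally have split: "torus_cov K T h N (indicator A) ?s
    = torus_cov K T h N (indicator B) ?s + torus_sum K T h N (indicator P) * torus_sum K T h N (\<lambda>\<omega>. 1 - ?s \<omega>)" .
  have "0 \<le> torus_cov K T h N (indicator B) ?s"
    using mono_on_subset[OF mono_on_indicator_flip_closed[OF inc] TConf_subset_Omega]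
    unfolding B_def by (intro torus_cov_spin_nonneg[OF KT]) auto
  moreover have "C * ?Z \<le> torus_sum K T h N (\<lambda>\<omega>. 1 - ?s \<omega>)"
    using mult_right_mono[OF C(2) less_imp_le[OF torus_sum_one_pos[of K T h N]]]
      torus_sum_spin_down_ge[OF v KT, of h] by (rule order_trans)
  moreover have "0 \<le> torus_sum K T h N (indicator P)" by (rule torus_sum_nonneg) simp
  ultimately have "torus_sum K T h N (indicator P) * (C * ?Z)
      \<le> torus_cov K T h N (indicator B) ?s + torus_sum K T h N (indicator P) * torus_sum K T h N (\<lambda>\<omega>. 1 - ?s \<omega>)"
    by (meson add_increasing mult_left_mono)
  then show ?thesis unfolding split P_def by (simp add: mult_ac)
qed

section \<open>Differentiating along the field path\<close>

lemma torus_sum_has_derivative: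
  assumes "K * T \<noteq> 0"
  shows "((\<lambda>s. torus_sum K T (a + s * b) N f) has_real_derivative
      b / (K * T) * torus_sum K T (a + t * b) N (\<lambda>\<omega>. magnetization N \<omega> * f \<omega>)) (at t)"
proof -
  have "((\<lambda>s. torus_weight K T (a + s * b) N \<omega> * f \<omega>) has_real_derivative
      torus_weight K T (a + t * b) N \<omega> * (b * magnetization N \<omega> / (K * T)) * f \<omega>) (at t)" for \<omega>
    unfolding torus_weight_eq using assms by (auto intro!: derivative_eq_intros)
  then have "((\<lambda>s. torus_sum K T (a + s * b) N f) has_real_derivative
      (\<Sum>\<omega>\<in>TConf N. torus_weight K T (a + t * b) N \<omega> * (b * magnetization N \<omega> / (K * T)) * f \<omega>)) (at t)"
    unfolding torus_sum_def by (rule DERIV_sum)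
  then show ?thesis by (simp add: torus_sum_def sum_distrib_left mult_ac)
qed

lemma per_measure_along_line_has_derivative:
  assumes "K * T \<noteq> 0"
  shows "((\<lambda>s. per_measure K T (a + s * b) N A) has_real_derivative
      b / (K * T) * torus_cov K T (a + t * b) N (indicator A) (magnetization N)
        / (torus_sum K T (a + t * b) N (\<lambda>_. 1))\<^sup>2) (at t)"
proof -
  let ?Z = "torus_sum K T (a + t * b) N (\<lambda>_. 1)"
  have "((\<lambda>s. torus_sum K T (a + s * b) N (indicator A) / torus_sum K T (a + s * b) N (\<lambda>_. 1))
    has_real_derivative
      (b / (K * T) * torus_sum K T (a + t * b) N (\<lambda>\<omega>. magnetization N \<omega> * indicator A \<omega>) * ?Z
       - torus_sum K T (a + t * b) N (indicator A)
         * (b / (K * T) * torus_sum K T (a + t * b) N (\<lambda>\<omega>. magnetization N \<omega> * 1))) / (?Z * ?Z)) (at t)"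
    using torus_sum_one_pos[of K T "a + t * b" N]
    by (intro DERIV_divide torus_sum_has_derivative assms) simp
  then show ?thesis
    unfolding per_measure_eq_torus_sum torus_cov_def by (simp add: power2_eq_square algebra_simps)
qed

lemma pivotal_sum_le_cov_magnetization:
  assumes KT: "0 < K * T" and inc: "increasing A" and supp: "Supp A \<subseteq> tbox N"
    and C: "0 \<le> C" "C \<le> exp (- (12 + 2 * \<bar>h\<bar>) / (K * T))"
  shows "C * (\<Sum>v\<in>Supp A. per_measure K T h N (A \<inter> Delta v A))
    \<le> torus_cov K T h N (indicator A) (magnetization N) / (torus_sum K T h N (\<lambda>_. 1))\<^sup>2"
proof -
  let ?Z = "torus_sum K T h N (\<lambda>_. 1)"
  let ?cov = "\<lambda>u. torus_cov K T h N (indicator A) (\<lambda>\<omega>. real_of_int (\<omega> u))"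
  have "C * ?Z * (\<Sum>v\<in>Supp A. torus_sum K T h N (indicator (A \<inter> Delta v A))) \<le> (\<Sum>v\<in>Supp A. ?cov v)"
    unfolding sum_distrib_left
    using supp by (intro sum_mono torus_cov_spin_ge_pivotal[OF KT inc _ C]) auto
  also have "\<dots> \<le> (\<Sum>u\<in>tbox N. ?cov u)"
    using mono_on_subset[OF mono_on_indicator[OF inc] TConf_subset_Omega]
    by (intro sum_mono2[OF finite_tbox supp] torus_cov_spin_nonneg[OF KT]) auto
  also have "\<dots> = torus_cov K T h N (indicator A) (magnetization N)"
    using torus_cov_sum_right[of K T h N "indicator A" "\<lambda>u \<omega>. real_of_int (\<omega> u)" "tbox N"]
    by (simp add: magnetization_def[abs_def])
  finally show ?thesis
    using torus_sum_one_pos[of K T h N]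
    by (simp add: per_measure_eq_torus_sum sum_divide_distrib[symmetric] power2_eq_square
        field_simps)
qed

lemma hpath_eq: "hpath hc h s = min h hc + s * \<bar>h - hc\<bar>"
  unfolding hpath_def by auto

lemma hpath_abs_le:
  assumes "t \<in> {0..1}"
  shows "\<bar>hpath hc h t\<bar> \<le> max \<bar>h\<bar> \<bar>hc\<bar>"
proof -
  define d where "d = t * \<bar>h - hc\<bar>"
  have "0 \<le> d" "d \<le> \<bar>h - hc\<bar>"
    using assms unfolding d_def by (auto simp: mult_left_le_one_le)
  then show ?thesis unfolding hpath_eq d_def[symmetric] by auto
qed

theorem lemma8p3:
  fixes K T h :: real
  assumes "0 < K" and "0 < T" and "T > T_c K"
    and "0 < h" and "h < 2 * h_c K T" and "h \<noteq> h_c K T"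
  shows "\<exists>C17 > 0. \<forall>(k::nat) (N::nat) (A::config set) (t::real).
           2 ^ k < N \<longrightarrow> increasing A \<longrightarrow> F_meas (Sbox (2 ^ k)) A \<longrightarrow> t \<in> {0..1} \<longrightarrow>
           (\<exists>D. ((\<lambda>s. per_measure K T (hpath (h_c K T) h s) N A) has_real_derivative D) (at t) \<and>
                C17 * \<bar>h - h_c K T\<bar> / (K * T) *
                  (\<Sum>v\<in>Supp A. per_measure K T (hpath (h_c K T) h t) N (A \<inter> Delta v A)) \<le> D)"
proof -
  define hc where "hc = h_c K T"
  define C where "C = exp (- (12 + 2 * max \<bar>h\<bar> \<bar>hc\<bar>) / (K * T))"
  have KT: "0 < K * T" using assms by simp
  show ?thesis unfolding hc_def[symmetric]
  proof (rule exI[of _ C], intro conjI allI impI)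
    show "0 < C" unfolding C_def by simp
    fix k N :: nat and A :: "config set" and t :: real
    assume "2 ^ k < N" and inc: "increasing A" and "F_meas (Sbox (2 ^ k)) A" and t: "t \<in> {0..1}"
    then have "Supp A \<subseteq> tbox N" using Supp_subset Sbox_subset_tbox by blast
    moreover have "C \<le> exp (- (12 + 2 * \<bar>hpath hc h t\<bar>) / (K * T))"
      unfolding C_def using hpath_abs_le[OF t, of hc h] KT by (simp add: divide_right_mono)
    ultimately have bound: "C * (\<Sum>v\<in>Supp A. per_measure K T (hpath hc h t) N (A \<inter> Delta v A))
      \<le> torus_cov K T (hpath hc h t) N (indicator A) (magnetization N)
          / (torus_sum K T (hpath hc h t) N (\<lambda>_. 1))\<^sup>2" (is "C * ?S \<le> ?R")
      by (intro pivotal_sum_le_cov_magnetization[OF KT inc]) (auto simp: C_def)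
    have "C * \<bar>h - hc\<bar> / (K * T) * ?S = \<bar>h - hc\<bar> / (K * T) * (C * ?S)" by simp
    also have "\<dots> \<le> \<bar>h - hc\<bar> / (K * T) * ?R" using bound KT by (intro mult_left_mono) auto
    finally show "\<exists>D. ((\<lambda>s. per_measure K T (hpath hc h s) N A) has_real_derivative D) (at t) \<and>
        C * \<bar>h - hc\<bar> / (K * T) * ?S \<le> D"
      using per_measure_along_line_has_derivative[of K T "min h hc" "\<bar>h - hc\<bar>" N A t] assms(1,2)
      unfolding hpath_eq by auto
  qed
qed

end
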